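(* Let $G$ be a finite simple triangle-free graph without isolated vertices having a maximum open packing (a set of size $\rho_o(G)$) whose induced subgraph has all components isomorphic to $K_2$, and let $H$ be a finite bipartite graph of order at least two without isolated vertices. Then $$\gamma_{tR}(G\times H)\ge \rho_o(G)\gamma_{tR}(H).$$
   Context: An open packing of $G$ is a set $D$ of vertices with $N(u)\cap N(v)=\emptyset$ for all distinct $u,v\in D$ (open neighborhoods); $\rho_o(G)$ is the maximum size of an open packing. A total Roman dominating function on $H$ is a map $f:V(H)\to\{0,1,2\}$ such that every vertex with label 0 has a neighbor with label 2 and the subgraph induced by vertices with positive labels has no isolated vertices; $\gamma_{tR}(H)$ is the minimum of $\sum_v f(v)$ over such $f$. The direct product $G\times H$ has vertex set $V(G)\times V(H)$, with $(g,h)(g',h')$ an edge iff $gg'\in E(G)$ and $hh'\in E(H)$. *)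

theory Defs
  imports Main
begin

definition simple_graph :: "'a set \<Rightarrow> 'a set set \<Rightarrow> bool" where
  "simple_graph V E \<longleftrightarrow> finite V \<and>
     (\<forall>e\<in>E. \<exists>u v. u \<in> V \<and> v \<in> V \<and> u \<noteq> v \<and> e = {u, v})"

definition adj :: "'a set set \<Rightarrow> 'a \<Rightarrow> 'a \<Rightarrow> bool" where
  "adj E u v \<longleftrightarrow> u \<noteq> v \<and> {u, v} \<in> E"

definition nbhd :: "'a set \<Rightarrow> 'a set set \<Rightarrow> 'a \<Rightarrow> 'a set" where
  "nbhd V E u = {v \<in> V. adj E u v}"

definition no_isolated :: "'a set \<Rightarrow> 'a set set \<Rightarrow> bool" where
  "no_isolated V E \<longleftrightarrow> (\<forall>u\<in>V. \<exists>v\<in>V. adj E u v)"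

definition triangle_free :: "'a set \<Rightarrow> 'a set set \<Rightarrow> bool" where
  "triangle_free V E \<longleftrightarrow>
     \<not> (\<exists>a\<in>V. \<exists>b\<in>V. \<exists>c\<in>V. adj E a b \<and> adj E b c \<and> adj E a c)"

definition bipartite :: "'a set \<Rightarrow> 'a set set \<Rightarrow> bool" where
  "bipartite V E \<longleftrightarrow> (\<exists>A B. A \<union> B = V \<and> A \<inter> B = {} \<and>
     (\<forall>u\<in>V. \<forall>v\<in>V. adj E u v \<longrightarrow> (u \<in> A \<and> v \<in> B) \<or> (u \<in> B \<and> v \<in> A)))"

definition open_packing :: "'a set \<Rightarrow> 'a set set \<Rightarrow> 'a set \<Rightarrow> bool" where
  "open_packing V E D \<longleftrightarrow> D \<subseteq> V \<and>
     (\<forall>u\<in>D. \<forall>v\<in>D. u \<noteq> v \<longrightarrow> nbhd V E u \<inter> nbhd V E v = {})"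

definition rho_o :: "'a set \<Rightarrow> 'a set set \<Rightarrow> nat" where
  "rho_o V E = Max (card ` {D. open_packing V E D})"

text \<open>The subgraph induced by D has every component isomorphic to K2,
  i.e. every vertex of D has exactly one neighbour inside D.\<close>
definition induced_K2_components :: "'a set \<Rightarrow> 'a set set \<Rightarrow> 'a set \<Rightarrow> bool" where
  "induced_K2_components V E D \<longleftrightarrow> (\<forall>u\<in>D. \<exists>!v. v \<in> D \<and> adj E u v)"

definition trdf :: "'a set \<Rightarrow> 'a set set \<Rightarrow> ('a \<Rightarrow> nat) \<Rightarrow> bool" where
  "trdf V E f \<longleftrightarrow>
     (\<forall>v\<in>V. f v \<le> 2) \<and>
     (\<forall>v\<in>V. f v = 0 \<longrightarrow> (\<exists>u\<in>V. adj E v u \<and> f u = 2)) \<and>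
     (\<forall>v\<in>V. f v > 0 \<longrightarrow> (\<exists>u\<in>V. adj E v u \<and> f u > 0))"

definition gamma_tR :: "'a set \<Rightarrow> 'a set set \<Rightarrow> nat" where
  "gamma_tR V E = Min ((\<lambda>f. \<Sum>v\<in>V. f v) ` {f. trdf V E f})"

definition dprod_V :: "'a set \<Rightarrow> 'b set \<Rightarrow> ('a \<times> 'b) set" where
  "dprod_V VG VH = VG \<times> VH"

definition dprod_E :: "'a set set \<Rightarrow> 'b set set \<Rightarrow> ('a \<times> 'b) set set" where
  "dprod_E EG EH = {{(g, h), (g', h')} | g h g' h'. adj EG g g' \<and> adj EH h h'}"

end

theory Submission
  imports Defs
begin

text \<open>Let \<open>f\<close> be a minimum total Roman dominating function of \<open>G \<times> H\<close>, let the maximum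
  open packing \<open>D\<close> be matched in pairs \<open>u, u'\<close>, and let \<open>A, B\<close> be a bipartition of \<open>H\<close>.
  For \<open>u \<in> D\<close> put \<open>g\<^sub>u(h) = min 2 (\<Sum>y\<in>N(x). f(y,h))\<close>, where \<open>x = u\<close> for \<open>h \<in> A\<close> and
  \<open>x = u'\<close> for \<open>h \<in> B\<close>. Then \<open>g\<^sub>u\<close> is a total Roman dominating function of \<open>H\<close>: the
  partner \<open>x'\<close> of \<open>x\<close> lies in \<open>N(x)\<close>, and the neighbour \<open>(y', h')\<close> of \<open>(x', h)\<close> that
  dominates it in \<open>G \<times> H\<close> has \<open>h'\<close> on the other side of \<open>H\<close>, where \<open>g\<^sub>u\<close> sums over
  \<open>N(x') \<ni> y'\<close>. Summing the \<open>g\<^sub>u\<close> and reindexing the \<open>B\<close>-parts along the matching counts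
  every \<open>f(y,h)\<close> with \<open>y \<in> N(u)\<close>, \<open>u \<in> D\<close>, once, and the \<open>N(u)\<close> are disjoint.\<close>

lemma adj_sym: "adj E u v \<longleftrightarrow> adj E v u"
  unfolding adj_def by (auto simp: insert_commute)

lemma adj_dprod_E_iff: "adj (dprod_E EG EH) (g, h) (g', h') \<longleftrightarrow> adj EG g g' \<and> adj EH h h'"
proof
  assume "adj (dprod_E EG EH) (g, h) (g', h')"
  then obtain a b c d where "{(g, h), (g', h')} = {(a, b), (c, d)}" "adj EG a c" "adj EH b d"
    unfolding adj_def dprod_E_def by blast
  then show "adj EG g g' \<and> adj EH h h'"
    by (auto simp: doubleton_eq_iff adj_sym)
next
  assume "adj EG g g' \<and> adj EH h h'"
  then show "adj (dprod_E EG EH) (g, h) (g', h')"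
    unfolding dprod_E_def by (auto simp: adj_def)
qed

lemma simple_graph_finite: "simple_graph V E \<Longrightarrow> finite V"
  unfolding simple_graph_def by simp

lemma no_isolated_dprod:
  assumes "no_isolated VG EG" and "no_isolated VH EH"
  shows "no_isolated (dprod_V VG VH) (dprod_E EG EH)"
  using assms unfolding no_isolated_def dprod_V_def by (fastforce simp: adj_dprod_E_iff)

lemma trdf_iff:
  "trdf V E f \<longleftrightarrow> (\<forall>v\<in>V. f v \<le> 2) \<and>
     (\<forall>v\<in>V. \<exists>u\<in>V. adj E v u \<and> 0 < f u \<and> (f v = 0 \<longrightarrow> f u = 2))"
proof -
  have "(f v = 0 \<longrightarrow> (\<exists>u\<in>V. adj E v u \<and> f u = 2)) \<and> (0 < f v \<longrightarrow> (\<exists>u\<in>V. adj E v u \<and> 0 < f u))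
    \<longleftrightarrow> (\<exists>u\<in>V. adj E v u \<and> 0 < f u \<and> (f v = 0 \<longrightarrow> f u = 2))" for v
    by (cases "f v = 0") auto
  then show ?thesis
    unfolding trdf_def ball_conj_distrib[symmetric] by simp
qed

lemma trdf_const_2: "no_isolated V E \<Longrightarrow> trdf V E (\<lambda>_. 2)"
  unfolding trdf_def no_isolated_def by auto

lemma finite_trdf_weights:
  assumes "finite V"
  shows "finite ((\<lambda>f. \<Sum>v\<in>V. f v) ` {f. trdf V E f})"
proof (rule finite_subset)
  show "(\<lambda>f. \<Sum>v\<in>V. f v) ` {f. trdf V E f} \<subseteq> {..2 * card V}"
  proof (rule image_subsetI)
    fix f assume "f \<in> {f. trdf V E f}"
    then have "(\<Sum>v\<in>V. f v) \<le> (\<Sum>v\<in>V. 2)"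
      unfolding trdf_def by (intro sum_mono) auto
    then show "(\<Sum>v\<in>V. f v) \<in> {..2 * card V}" by simp
  qed
qed simp

lemma gamma_tR_le:
  assumes "finite V" and "trdf V E f"
  shows "gamma_tR V E \<le> (\<Sum>v\<in>V. f v)"
  unfolding gamma_tR_def using finite_trdf_weights[OF assms(1)] assms(2)
  by (intro Min_le) auto

lemma gamma_tR_attained:
  assumes "finite V" and "no_isolated V E"
  obtains f where "trdf V E f" and "gamma_tR V E = (\<Sum>v\<in>V. f v)"
proof -
  have "(\<lambda>f. \<Sum>v\<in>V. f v) ` {f. trdf V E f} \<noteq> {}"
    using trdf_const_2[OF assms(2)] by blast
  from Min_in[OF finite_trdf_weights[OF assms(1)] this] show ?thesis
    using that unfolding gamma_tR_def by auto
qed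

lemma trdf_projection_along_edge:
  assumes f: "trdf (dprod_V VG VH) (dprod_E EG EH) f"
    and G: "finite VG" and uv: "u \<in> VG" "v \<in> VG" "adj EG u v"
    and AB: "A \<inter> B = {}" "\<And>h h'. h \<in> VH \<Longrightarrow> h' \<in> VH \<Longrightarrow> adj EH h h' \<Longrightarrow>
      (h \<in> A \<and> h' \<in> B) \<or> (h \<in> B \<and> h' \<in> A)"
  shows "trdf VH EH (\<lambda>h. min 2 (\<Sum>y\<in>nbhd VG EG (if h \<in> A then u else v). f (y, h)))"
    (is "trdf VH EH ?g")
proof -
  define side where "side h = (if h \<in> A then u else v)" for h
  define other where "other h = (if h \<in> A then v else u)" for h
  have "\<exists>h'\<in>VH. adj EH h h' \<and> 0 < ?g h' \<and> (?g h = 0 \<longrightarrow> ?g h' = 2)" if h: "h \<in> VH" for h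
  proof -
    have "(other h, h) \<in> dprod_V VG VH"
      using uv h unfolding other_def dprod_V_def by simp
    then obtain z where z: "z \<in> dprod_V VG VH" "adj (dprod_E EG EH) (other h, h) z"
      "0 < f z" "f (other h, h) = 0 \<longrightarrow> f z = 2"
      using f unfolding trdf_iff by blast
    obtain y' h' where "z = (y', h')" by fastforce
    with z have y'h': "y' \<in> VG" "h' \<in> VH" "adj EG (other h) y'" "adj EH h h'"
      "0 < f (y', h')" "f (other h, h) = 0 \<longrightarrow> f (y', h') = 2"
      by (auto simp: dprod_V_def adj_dprod_E_iff)
    have side_h': "side h' = other h"
      using AB(1) AB(2)[OF h y'h'(2,4)] unfolding side_def other_def by auto
    have "y' \<in> nbhd VG EG (side h')"
      using y'h' side_h' unfolding nbhd_def by simp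
    then have y'_le: "f (y', h') \<le> (\<Sum>y\<in>nbhd VG EG (side h'). f (y, h'))"
      using G by (intro member_le_sum) (auto simp: nbhd_def)
    have "other h \<in> nbhd VG EG (side h)"
      using uv adj_sym[of EG u v] unfolding nbhd_def side_def other_def by auto
    moreover have "finite (nbhd VG EG (side h))"
      using G unfolding nbhd_def by simp
    ultimately have "?g h = 0 \<Longrightarrow> f (other h, h) = 0"
      unfolding side_def by (auto simp: sum_eq_0_iff min_def split: if_splits)
    then show ?thesis
      using y'h' y'_le unfolding side_def by auto
  qed
  then show ?thesis unfolding trdf_iff by auto
qed

lemma gamma_tR_le_edge_weights:
  assumes f: "trdf (dprod_V VG VH) (dprod_E EG EH) f"
    and G: "finite VG" and uv: "u \<in> VG" "v \<in> VG" "adj EG u v"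
    and H: "finite VH" and AB: "A \<union> B = VH" "A \<inter> B = {}"
      "\<And>h h'. h \<in> VH \<Longrightarrow> h' \<in> VH \<Longrightarrow> adj EH h h' \<Longrightarrow> (h \<in> A \<and> h' \<in> B) \<or> (h \<in> B \<and> h' \<in> A)"
  shows "gamma_tR VH EH \<le>
    (\<Sum>h\<in>A. \<Sum>y\<in>nbhd VG EG u. f (y, h)) + (\<Sum>h\<in>B. \<Sum>y\<in>nbhd VG EG v. f (y, h))"
proof -
  let ?g = "\<lambda>h. min 2 (\<Sum>y\<in>nbhd VG EG (if h \<in> A then u else v). f (y, h))"
  have "finite A" "finite B" using H AB(1) by (auto intro: finite_subset)
  have "gamma_tR VH EH \<le> (\<Sum>h\<in>VH. ?g h)"
    using gamma_tR_le[OF H trdf_projection_along_edge[OF f G uv AB(2,3)]] .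
  also have "\<dots> = (\<Sum>h\<in>A. ?g h) + (\<Sum>h\<in>B. ?g h)"
    unfolding AB(1)[symmetric] using \<open>finite A\<close> \<open>finite B\<close> AB(2) by (rule sum.union_disjoint)
  also have "\<dots> \<le> (\<Sum>h\<in>A. \<Sum>y\<in>nbhd VG EG u. f (y, h)) + (\<Sum>h\<in>B. \<Sum>y\<in>nbhd VG EG v. f (y, h))"
    using AB(2) by (intro add_mono sum_mono) (auto simp: disjoint_iff)
  finally show ?thesis .
qed

lemma induced_K2_components_partner:
  assumes "induced_K2_components V E D"
  obtains p where "\<And>u. u \<in> D \<Longrightarrow> p u \<in> D \<and> adj E u (p u)" and "bij_betw p D D"
proof
  define p where "p u = (THE v. v \<in> D \<and> adj E u v)" for u
  show p: "p u \<in> D \<and> adj E u (p u)" if "u \<in> D" for u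
    using assms that unfolding p_def induced_K2_components_def by (metis (no_types, lifting) theI)
  have "p (p u) = u" if "u \<in> D" for u
    using assms p[OF that] p[of "p u"] that adj_sym
    unfolding induced_K2_components_def by metis
  then show "bij_betw p D D"
    using p by (intro bij_betw_byWitness[of D p p D]) auto
qed

lemma sum_union_reindex_bij_betw:
  assumes "bij_betw p D D" and "finite A" and "finite B" and "A \<inter> B = {}"
  shows "(\<Sum>u\<in>D. (\<Sum>h\<in>A. F u h) + (\<Sum>h\<in>B. F (p u) h)) = (\<Sum>u\<in>D. \<Sum>h\<in>A \<union> B. F u h)"
proof -
  have "(\<Sum>u\<in>D. \<Sum>h\<in>B. F (p u) h) = (\<Sum>u\<in>D. \<Sum>h\<in>B. F u h)"
    using sum.reindex_bij_betw[OF assms(1), of "\<lambda>u. \<Sum>h\<in>B. F u h"] by simp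
  then show ?thesis
    using assms(2-4) by (simp add: sum.distrib sum.union_disjoint)
qed

lemma open_packing_sum_nbhd_le:
  fixes w :: "'a \<Rightarrow> nat"
  assumes "open_packing V E D" and "finite V"
  shows "(\<Sum>u\<in>D. \<Sum>y\<in>nbhd V E u. w y) \<le> (\<Sum>y\<in>V. w y)"
proof -
  have "finite D" using assms unfolding open_packing_def by (auto intro: finite_subset)
  then have "(\<Sum>u\<in>D. \<Sum>y\<in>nbhd V E u. w y) = (\<Sum>y\<in>(\<Union>u\<in>D. nbhd V E u). w y)"
    using assms unfolding open_packing_def
    by (intro sum.UNION_disjoint[symmetric]) (auto simp: nbhd_def)
  also have "\<dots> \<le> (\<Sum>y\<in>V. w y)"
    using assms(2) by (intro sum_mono2) (auto simp: nbhd_def)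
  finally show ?thesis .
qed

theorem theorem2p9:
  fixes VG :: "'a set" and EG :: "'a set set" and VH :: "'b set" and EH :: "'b set set"
  assumes "simple_graph VG EG" and "triangle_free VG EG" and "no_isolated VG EG"
    and "\<exists>D. open_packing VG EG D \<and> card D = rho_o VG EG \<and> induced_K2_components VG EG D"
    and "simple_graph VH EH" and "bipartite VH EH" and "card VH \<ge> 2" and "no_isolated VH EH"
  shows "gamma_tR (dprod_V VG VH) (dprod_E EG EH) \<ge> rho_o VG EG * gamma_tR VH EH"
proof -
  have G: "finite VG" and H: "finite VH" using assms(1,5) by (simp_all add: simple_graph_finite)
  then have "finite (dprod_V VG VH)" unfolding dprod_V_def by simp
  then obtain f where f: "trdf (dprod_V VG VH) (dprod_E EG EH) f"
    and gamma_f: "gamma_tR (dprod_V VG VH) (dprod_E EG EH) = (\<Sum>z\<in>dprod_V VG VH. f z)"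
    using gamma_tR_attained no_isolated_dprod[OF assms(3,8)] by blast
  obtain D where D: "open_packing VG EG D" "card D = rho_o VG EG" "induced_K2_components VG EG D"
    using assms(4) by blast
  obtain p where p: "\<And>u. u \<in> D \<Longrightarrow> p u \<in> D \<and> adj EG u (p u)" and "bij_betw p D D"
    using induced_K2_components_partner[OF D(3)] by blast
  obtain A B where AB: "A \<union> B = VH" "A \<inter> B = {}"
    "\<And>h h'. h \<in> VH \<Longrightarrow> h' \<in> VH \<Longrightarrow> adj EH h h' \<Longrightarrow> (h \<in> A \<and> h' \<in> B) \<or> (h \<in> B \<and> h' \<in> A)"
    using assms(6) unfolding bipartite_def by blast
  have "finite A" "finite B" using H AB(1) by (auto intro: finite_subset)
  let ?S = "\<lambda>u h. \<Sum>y\<in>nbhd VG EG u. f (y, h)"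
  have "gamma_tR VH EH \<le> (\<Sum>h\<in>A. ?S u h) + (\<Sum>h\<in>B. ?S (p u) h)" if "u \<in> D" for u
  proof (rule gamma_tR_le_edge_weights[OF f G _ _ _ H AB(1,2)])
    show "u \<in> VG" "p u \<in> VG" "adj EG u (p u)"
      using D(1) that p[OF that] unfolding open_packing_def by auto
  qed (fact AB(3))
  then have "card D * gamma_tR VH EH \<le> (\<Sum>u\<in>D. (\<Sum>h\<in>A. ?S u h) + (\<Sum>h\<in>B. ?S (p u) h))"
    using sum_mono[of D "\<lambda>_. gamma_tR VH EH"] by simp
  also have "\<dots> = (\<Sum>u\<in>D. \<Sum>h\<in>VH. ?S u h)"
    using sum_union_reindex_bij_betw[OF \<open>bij_betw p D D\<close> \<open>finite A\<close> \<open>finite B\<close> AB(2)] AB(1) by simp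
  also have "\<dots> = (\<Sum>u\<in>D. \<Sum>y\<in>nbhd VG EG u. \<Sum>h\<in>VH. f (y, h))"
    by (intro sum.cong refl sum.swap)
  also have "\<dots> \<le> (\<Sum>y\<in>VG. \<Sum>h\<in>VH. f (y, h))"
    by (rule open_packing_sum_nbhd_le[OF D(1) G])
  also have "\<dots> = (\<Sum>z\<in>dprod_V VG VH. f z)"
    by (simp add: dprod_V_def sum.cartesian_product)
  finally show ?thesis using D(2) gamma_f by simp
qed

end
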